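(* Let $d\ge1$, $\alpha\in(0,1)$, $\sigma_+,\sigma_->0$, and let $\mathcal{D}$ be the distribution on $\mathbb{R}^d\times\{\pm1\}$ with $y=+1$ with probability $\alpha$ and $y=-1$ with probability $1-\alpha$, where $\boldsymbol{x}\sim\mathcal{N}(\boldsymbol{1},\sigma_+^2 I)$ if $y=+1$ and $\boldsymbol{x}\sim\mathcal{N}(-\boldsymbol{1},\sigma_-^2 I)$ if $y=-1$, with $\boldsymbol{1}=(1,\dots,1)\in\mathbb{R}^d$. Let $f^*(\boldsymbol{x})=\mathrm{sign}(\langle\boldsymbol{w^*},\boldsymbol{x}\rangle+b^* )$ be the linear model minimizing the misclassification risk $R(f)=\alpha\,\mathbb{P}(f(\boldsymbol{x})=-1\mid y=+1)+(1-\alpha)\,\mathbb{P}(f(\boldsymbol{x})=+1\mid y=-1)$ on $\mathcal{D}$. If $\sigma_+>\sigma_-$ and $\frac{\alpha\sigma_-}{(1-\alpha)\sigma_+}>1$, then $S_{I,+1}(f^* )>S_{I,-1}(f^* )$.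
   Context: Fix $\sigma_I\ge0$ and let $\boldsymbol{\epsilon}_I\sim\mathcal{N}(\boldsymbol{0},\sigma_I^2 I)$ be independent of $\boldsymbol{x}$. The input smoothness of class $+1$ is $S_{I,+1}(f)=\mathbb{P}(\langle\boldsymbol{w},\boldsymbol{x}+\boldsymbol{\epsilon}_I\rangle+b>0\mid y=+1)$ and of class $-1$ is $S_{I,-1}(f)=\mathbb{P}(\langle\boldsymbol{w},\boldsymbol{x}+\boldsymbol{\epsilon}_I\rangle+b<0\mid y=-1)$, for $f(\boldsymbol{x})=\mathrm{sign}(\langle\boldsymbol{w},\boldsymbol{x}\rangle+b)$. *)

theory Defs
  imports "HOL-Probability.Probability"
begin

definition mvn_density :: "real^'n::finite \<Rightarrow> real \<Rightarrow> real^'n \<Rightarrow> real" where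
  "mvn_density mu s x =
     (2 * pi * s * s) powr (- (real CARD('n)) / 2) * exp (- (norm (x - mu) * norm (x - mu)) / (2 * s * s))"

definition gauss :: "real^'n::finite \<Rightarrow> real \<Rightarrow> (real^'n) measure" where
  "gauss mu s = (if s = 0 then return lborel mu
                 else density lborel (\<lambda>x. ennreal (mvn_density mu s x)))"

definition ones :: "real^'n::finite" where
  "ones = (\<chi> i. 1)"

text \<open>Linear classifier f(x) = sign(<w,x> + b), with values +1 / -1
  (convention: +1 iff <w,x> + b > 0, matching the strict inequality in S_{I,+1}).\<close>
definition lin_clf :: "real^'n::finite \<Rightarrow> real \<Rightarrow> real^'n \<Rightarrow> real" where
  "lin_clf w b x = (if inner w x + b > 0 then 1 else -1)"

definition lin_risk :: "real \<Rightarrow> real \<Rightarrow> real \<Rightarrow> real^'n::finite \<Rightarrow> real \<Rightarrow> real" where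
  "lin_risk alpha sp sm w b =
     alpha * measure (gauss ones sp) {x. lin_clf w b x = -1}
     + (1 - alpha) * measure (gauss (- ones) sm) {x. lin_clf w b x = 1}"

definition smooth_pos :: "real \<Rightarrow> real \<Rightarrow> real^'n::finite \<Rightarrow> real \<Rightarrow> real" where
  "smooth_pos sI sp w b =
     measure (gauss ones sp \<Otimes>\<^sub>M gauss 0 sI) {(x, e). inner w (x + e) + b > 0}"

definition smooth_neg :: "real \<Rightarrow> real \<Rightarrow> real^'n::finite \<Rightarrow> real \<Rightarrow> real" where
  "smooth_neg sI sm w b =
     measure (gauss (- ones) sm \<Otimes>\<^sub>M gauss 0 sI) {(x, e). inner w (x + e) + b < 0}"

end

theory Submission
  imports Defs
begin

(* For w \<noteq> 0 the score w \<bullet> x + b of x ~ N(mu, s^2 I) is normal with mean w \<bullet> mu + b and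
   standard deviation s |w|, and adding the independent noise e only inflates the variance to
   (s^2 + sI^2) |w|^2.  In terms of the standardised margins A = (w \<bullet> 1 + b) / (sp |w|) and
   B = (w \<bullet> 1 - b) / (sm |w|) of the two classes, the risk is alpha Phi(-A) + (1 - alpha) Phi(-B),
   while the two input smoothnesses are Phi(A sp / sqrt(sp^2 + sI^2)) and Phi(B sm / sqrt(sm^2 + sI^2)).
   Stationarity in b gives alpha phi(A) / sp = (1 - alpha) phi(B) / sm, which together with
   alpha sm > (1 - alpha) sp forces phi(A) < phi(B), i.e. |B| < |A|; comparing with the constant
   classifier +1, whose risk is 1 - alpha, rules out A \<le> 0.  Since s / sqrt(s^2 + sI^2) increases
   with s and sp > sm, the smoothed margin of class +1 is the larger one.  For w = 0 optimality
   forces b > 0, and the two smoothnesses are 1 and 0. *)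

section \<open>The standard normal distribution function\<close>

abbreviation std_normal :: "real measure" where
  "std_normal \<equiv> density lborel std_normal_density"

definition Phi :: "real \<Rightarrow> real" where
  "Phi t = measure std_normal {..t}"

lemma prob_space_std_normal: "prob_space std_normal"
  by (rule prob_space_normal_density) simp

lemma continuous_on_std_normal_density: "continuous_on S std_normal_density"
  unfolding normal_density_def by (intro continuous_intros) auto

lemma measure_std_normal_Icc:
  "measure std_normal {a..b} = integral {a..b} std_normal_density"
proof -
  have int: "std_normal_density integrable_on {a..b}"
    by (intro integrable_continuous_interval continuous_on_std_normal_density)
  then have "emeasure std_normal {a..b} = ennreal (integral {a..b} std_normal_density)"
    by (simp add: emeasure_density nn_integral_has_integral_lebesgue'[OF _ integrable_integral])
  moreover have "0 \<le> integral {a..b} std_normal_density"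
    using int by (intro integral_nonneg) auto
  ultimately show ?thesis
    by (simp add: measure_def)
qed

lemma Phi_eq_add_integral:
  assumes "a \<le> t"
  shows "Phi t = Phi a + integral {a..t} std_normal_density"
proof -
  interpret prob_space std_normal by (rule prob_space_std_normal)
  have decomp: "Phi t = measure std_normal {..<a} + measure std_normal {a..t}" if "a \<le> t" for t
  proof -
    have "{..t} = {..<a} \<union> {a..t}" using that by auto
    then show ?thesis
      unfolding Phi_def by (subst finite_measure_Union[symmetric]) auto
  qed
  show ?thesis
    using decomp[OF assms] decomp[of a] measure_std_normal_Icc[of a a] by (simp add: measure_std_normal_Icc)
qed

lemma Phi_has_real_derivative: "(Phi has_real_derivative std_normal_density t) (at t)"
proof -
  have "((\<lambda>u. integral {t-1..u} std_normal_density) has_vector_derivative std_normal_density t)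
      (at t within {t-1..t+1})"
    by (intro integral_has_vector_derivative continuous_on_std_normal_density) auto
  then have "((\<lambda>u. integral {t-1..u} std_normal_density) has_vector_derivative std_normal_density t) (at t)"
    by (subst (asm) at_within_interior) auto
  then have "((\<lambda>u. Phi (t-1) + integral {t-1..u} std_normal_density)
      has_real_derivative std_normal_density t) (at t)"
    by (auto simp: has_real_derivative_iff_has_vector_derivative intro!: derivative_eq_intros)
  then show ?thesis
  proof (rule has_field_derivative_transform_within_open[where S="{t-1<..}"])
    show "Phi (t-1) + integral {t-1..u} std_normal_density = Phi u" if "u \<in> {t-1<..}" for u
      using that Phi_eq_add_integral[of "t-1" u] by simp
  qed auto
qed

lemma Phi_less_iff [simp]: "Phi a < Phi b \<longleftrightarrow> a < b"
proof -
  have mono: "Phi a < Phi b" if "a < b" for a b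
    using that by (rule DERIV_pos_imp_increasing) (auto intro!: exI Phi_has_real_derivative normal_density_pos)
  show ?thesis
    using mono[of a b] mono[of b a] by (cases a b rule: linorder_cases) auto
qed

lemma Phi_le_iff [simp]: "Phi a \<le> Phi b \<longleftrightarrow> a \<le> b"
  by (meson Phi_less_iff not_le)

lemma Phi_nonneg: "0 \<le> Phi t"
  by (simp add: Phi_def)

lemma measure_std_normal_lessThan: "measure std_normal {..<t} = Phi t"
proof -
  interpret prob_space std_normal by (rule prob_space_std_normal)
  have "{..t} = {..<t} \<union> {t..t}" by auto
  then have "Phi t = measure std_normal {..<t} + measure std_normal {t..t}"
    unfolding Phi_def by (subst finite_measure_Union[symmetric]) auto
  then show ?thesis
    using measure_std_normal_Icc[of t t] by simp
qed

lemma distr_std_normal_uminus: "distr std_normal borel uminus = std_normal"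
proof -
  have "std_normal = density (distr lborel borel uminus) std_normal_density"
    by (simp add: lborel_distr_uminus)
  also have "\<dots> = distr (density lborel (\<lambda>x. std_normal_density (- x))) borel uminus"
    by (rule density_distr) auto
  finally show ?thesis
    by (simp add: std_normal_density_def)
qed

lemma measure_std_normal_greaterThan: "measure std_normal {t<..} = Phi (- t)"
proof -
  have "measure std_normal {t<..} = measure (distr std_normal borel uminus) {t<..}"
    by (simp add: distr_std_normal_uminus)
  also have "\<dots> = measure std_normal {..< - t}"
    by (subst measure_distr) (auto intro!: arg_cong[where f="measure std_normal"])
  finally show ?thesis
    by (simp add: measure_std_normal_lessThan)
qed

lemma Phi_minus: "Phi (- t) = 1 - Phi t"
proof -
  interpret prob_space std_normal by (rule prob_space_std_normal)
  have "Phi (- t) = measure std_normal (space std_normal - {..t})"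
    by (simp flip: measure_std_normal_greaterThan) (metis Compl_atMost Compl_eq_Diff_UNIV)
  also have "\<dots> = 1 - Phi t"
    using prob_compl[of "{..t}"] by (simp add: Phi_def)
  finally show ?thesis .
qed

lemma (in prob_space) prob_std_normal_distributed:
  assumes "distributed M lborel Z std_normal_density" and "A \<in> sets borel"
  shows "prob (Z -` A \<inter> space M) = measure std_normal A"
proof -
  have "Z \<in> borel_measurable M" and "distr M lborel Z = std_normal"
    using assms(1) by (auto simp: distributed_def)
  then show ?thesis
    using assms(2) measure_distr[of Z M lborel A] by simp
qed

lemma (in prob_space) prob_normal_less:
  assumes Y: "distributed M lborel Y (normal_density \<mu> \<sigma>)" and \<sigma>: "0 < \<sigma>"
  shows "prob {x \<in> space M. Y x < c} = Phi ((c - \<mu>) / \<sigma>)"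
proof -
  have Z: "distributed M lborel (\<lambda>x. (Y x - \<mu>) / \<sigma>) std_normal_density"
    using Y normal_standard_normal_convert[OF \<sigma>] by simp
  have "{x \<in> space M. Y x < c} = (\<lambda>x. (Y x - \<mu>) / \<sigma>) -` {..< (c - \<mu>) / \<sigma>} \<inter> space M"
    using \<sigma> by (auto simp: divide_less_cancel)
  then show ?thesis
    by (simp add: prob_std_normal_distributed[OF Z] measure_std_normal_lessThan)
qed

lemma (in prob_space) prob_normal_greater:
  assumes Y: "distributed M lborel Y (normal_density \<mu> \<sigma>)" and \<sigma>: "0 < \<sigma>"
  shows "prob {x \<in> space M. c < Y x} = Phi ((\<mu> - c) / \<sigma>)"
proof -
  have Z: "distributed M lborel (\<lambda>x. (Y x - \<mu>) / \<sigma>) std_normal_density"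
    using Y normal_standard_normal_convert[OF \<sigma>] by simp
  have "{x \<in> space M. c < Y x} = (\<lambda>x. (Y x - \<mu>) / \<sigma>) -` {(c - \<mu>) / \<sigma> <..} \<inter> space M"
    using \<sigma> by (auto simp: divide_less_cancel)
  moreover have "- ((c - \<mu>) / \<sigma>) = (\<mu> - c) / \<sigma>"
    by (metis minus_diff_eq minus_divide_left)
  ultimately show ?thesis
    by (simp add: prob_std_normal_distributed[OF Z] measure_std_normal_greaterThan)
qed

section \<open>Isotropic Gaussian vectors\<close>

lemma density_PiM_lborel_prod:
  fixes g :: "'i \<Rightarrow> real \<Rightarrow> real"
  assumes I: "finite I" and [measurable]: "\<And>i. g i \<in> borel_measurable borel"
    and prob: "\<And>i. prob_space (density lborel (g i))"
  shows "density (\<Pi>\<^sub>M i\<in>I. lborel) (\<lambda>f. \<Prod>i\<in>I. ennreal (g i (f i)))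
         = (\<Pi>\<^sub>M i\<in>I. density lborel (g i))"
proof -
  interpret L: product_sigma_finite "\<lambda>_. lborel" ..
  interpret G: product_sigma_finite "\<lambda>i. density lborel (g i)"
    using prob by (simp add: product_sigma_finite_def prob_space_imp_sigma_finite)
  show ?thesis
  proof (rule G.PiM_eqI[OF I])
    show "sets (density (\<Pi>\<^sub>M i\<in>I. lborel) (\<lambda>f. \<Prod>i\<in>I. ennreal (g i (f i))))
          = sets (\<Pi>\<^sub>M i\<in>I. density lborel (g i))"
      unfolding sets_density by (intro sets_PiM_cong refl) (simp only: sets_density)
  next
    fix A assume "\<And>i. i \<in> I \<Longrightarrow> A i \<in> sets (density lborel (g i))"
    then have A[measurable]: "\<And>i. i \<in> I \<Longrightarrow> A i \<in> sets borel" by simp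
    have "emeasure (density (\<Pi>\<^sub>M i\<in>I. lborel) (\<lambda>f. \<Prod>i\<in>I. ennreal (g i (f i)))) (Pi\<^sub>E I A)
        = (\<integral>\<^sup>+f. (\<Prod>i\<in>I. ennreal (g i (f i))) * indicator (Pi\<^sub>E I A) f \<partial>(\<Pi>\<^sub>M i\<in>I. lborel))"
      using A by (subst emeasure_density) (auto intro!: sets_PiM_I_finite I)
    also have "\<dots> = (\<integral>\<^sup>+f. (\<Prod>i\<in>I. ennreal (g i (f i)) * indicator (A i) (f i)) \<partial>(\<Pi>\<^sub>M i\<in>I. lborel))"
    proof (intro nn_integral_cong)
      fix f assume "f \<in> space (\<Pi>\<^sub>M i\<in>I. lborel :: real measure)"
      then have "indicator (Pi\<^sub>E I A) f = (\<Prod>i\<in>I. indicator (A i) (f i) :: ennreal)"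
        using I by (auto simp: space_PiM indicator_def PiE_def prod_ennreal Pi_def)
      then show "(\<Prod>i\<in>I. ennreal (g i (f i))) * indicator (Pi\<^sub>E I A) f
          = (\<Prod>i\<in>I. ennreal (g i (f i)) * indicator (A i) (f i))"
        by (simp add: prod.distrib)
    qed
    also have "\<dots> = (\<Prod>i\<in>I. \<integral>\<^sup>+x. ennreal (g i x) * indicator (A i) x \<partial>lborel)"
      using A by (subst L.product_nn_integral_prod[OF I]) auto
    also have "\<dots> = (\<Prod>i\<in>I. emeasure (density lborel (g i)) (A i))"
      using A by (intro prod.cong refl) (simp add: emeasure_density)
    finally show "emeasure (density (\<Pi>\<^sub>M i\<in>I. lborel) (\<lambda>f. \<Prod>i\<in>I. ennreal (g i (f i)))) (Pi\<^sub>E I A)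
        = (\<Prod>i\<in>I. emeasure (density lborel (g i)) (A i))" .
  qed
qed

lemma mvn_density_eq_prod:
  fixes mu x :: "real^'n::finite"
  assumes "0 < s"
  shows "mvn_density mu s x = (\<Prod>b\<in>Basis. normal_density (mu \<bullet> b) s (x \<bullet> b))"
proof -
  define v where "v = 2 * pi * s\<^sup>2"
  have "0 < v" using assms by (simp add: v_def)
  have "norm (x - mu) * norm (x - mu) = (x - mu) \<bullet> (x - mu)"
    by (simp flip: power2_eq_square power2_norm_eq_inner)
  also have "\<dots> = (\<Sum>b\<in>Basis. ((x - mu) \<bullet> b) * ((x - mu) \<bullet> b))"
    by (rule euclidean_inner)
  finally have norm_sq: "norm (x - mu) * norm (x - mu) = (\<Sum>b\<in>Basis. (x \<bullet> b - mu \<bullet> b)\<^sup>2)"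
    by (simp add: inner_diff_left power2_eq_square)
  have const: "(1 / sqrt v) ^ card (Basis :: (real^'n) set) = (2 * pi * s * s) powr (- real CARD('n) / 2)"
  proof -
    have "1 / sqrt v = v powr (- (1/2))"
      using \<open>0 < v\<close> by (simp add: powr_half_sqrt[symmetric] powr_minus_divide)
    then have "(1 / sqrt v) ^ card (Basis :: (real^'n) set) = v powr (real CARD('n) * - (1/2))"
      using \<open>0 < v\<close> by (simp add: powr_power)
    then show ?thesis
      by (simp add: v_def power2_eq_square mult.assoc)
  qed
  have "(\<Prod>b\<in>Basis. normal_density (mu \<bullet> b) s (x \<bullet> b))
      = (\<Prod>b\<in>Basis. (1 / sqrt v) * exp (- (x \<bullet> b - mu \<bullet> b)\<^sup>2 / (2 * s\<^sup>2)))"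
    unfolding normal_density_def v_def by simp
  also have "\<dots> = (1 / sqrt v) ^ card (Basis :: (real^'n) set)
      * exp (\<Sum>b\<in>Basis. - (x \<bullet> b - mu \<bullet> b)\<^sup>2 / (2 * s\<^sup>2))"
    by (simp only: prod.distrib prod_constant exp_sum[OF finite_Basis])
  also have "(\<Sum>b\<in>Basis. - (x \<bullet> b - mu \<bullet> b)\<^sup>2 / (2 * s\<^sup>2)) = - (norm (x - mu) * norm (x - mu)) / (2 * s * s)"
    unfolding norm_sq by (simp add: sum_divide_distrib[symmetric] sum_negf power2_eq_square mult.assoc)
  finally show ?thesis
    unfolding mvn_density_def const by simp
qed

lemma inner_sum_Basis_scaleR:
  fixes f :: "'a::euclidean_space \<Rightarrow> real"
  assumes "b \<in> Basis"
  shows "(\<Sum>c\<in>Basis. f c *\<^sub>R c) \<bullet> b = f b"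
  using assms by (simp add: inner_sum_left inner_Basis if_distrib cong: if_cong)

lemma gauss_eq_distr_PiM:
  fixes mu :: "real^'n::finite"
  assumes "0 < s"
  shows "gauss mu s = distr (\<Pi>\<^sub>M b\<in>Basis. density lborel (normal_density (mu \<bullet> b) s)) borel
                              (\<lambda>f. \<Sum>b\<in>Basis. f b *\<^sub>R b)"
proof -
  let ?T = "\<lambda>f. \<Sum>b\<in>Basis. f b *\<^sub>R (b :: real^'n)"
  have [measurable]: "?T \<in> measurable (\<Pi>\<^sub>M b\<in>Basis. lborel) borel"
    by measurable
  have [measurable]: "(\<lambda>x. ennreal (mvn_density mu s x)) \<in> borel_measurable borel"
    unfolding mvn_density_def by measurable
  have "gauss mu s = density (distr (\<Pi>\<^sub>M b\<in>Basis. lborel) borel ?T) (mvn_density mu s)"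
    using assms by (simp add: gauss_def flip: lborel_eq)
  also have "\<dots> = distr (density (\<Pi>\<^sub>M b\<in>Basis. lborel) (\<lambda>f. mvn_density mu s (?T f))) borel ?T"
    by (rule density_distr) measurable
  also have "(\<lambda>f. ennreal (mvn_density mu s (?T f))) = (\<lambda>f. \<Prod>b\<in>Basis. ennreal (normal_density (mu \<bullet> b) s (f b)))"
    using assms by (simp add: mvn_density_eq_prod inner_sum_Basis_scaleR prod_ennreal cong: prod.cong)
  also have "density (\<Pi>\<^sub>M b\<in>Basis. lborel) \<dots> = (\<Pi>\<^sub>M b\<in>Basis. density lborel (normal_density (mu \<bullet> b) s))"
    using assms by (intro density_PiM_lborel_prod prob_space_normal_density) auto
  finally show ?thesis .
qed

lemma prob_space_gauss:
  fixes mu :: "real^'n::finite"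
  assumes "0 \<le> s"
  shows "prob_space (gauss mu s)"
proof (cases "s = 0")
  case True
  then show ?thesis
    by (simp add: gauss_def prob_space_return)
next
  case False
  with assms have "0 < s" by simp
  then have "prob_space (\<Pi>\<^sub>M b\<in>Basis. density lborel (normal_density (mu \<bullet> b) s))"
    by (intro prob_space_PiM prob_space_normal_density)
  then show ?thesis
    using \<open>0 < s\<close> by (simp add: gauss_eq_distr_PiM prob_space.prob_space_distr)
qed

lemma sets_gauss [simp, measurable_cong]: "sets (gauss mu s) = sets borel"
  by (simp add: gauss_def)

lemma space_gauss [simp]: "space (gauss mu s) = UNIV"
  by (simp add: gauss_def)

lemma (in product_prob_space) indep_vars_PiM_components:
  assumes "finite I" and "I \<noteq> {}"
  shows "prob_space.indep_vars (\<Pi>\<^sub>M i\<in>I. M i) M (\<lambda>i \<omega>. \<omega> i) I"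
proof -
  have "distr (\<Pi>\<^sub>M i\<in>I. M i) (\<Pi>\<^sub>M i\<in>I. M i) (\<lambda>\<omega>. \<lambda>i\<in>I. \<omega> i) = distr (\<Pi>\<^sub>M i\<in>I. M i) (\<Pi>\<^sub>M i\<in>I. M i) (\<lambda>\<omega>. \<omega>)"
    by (rule distr_cong) (auto simp: space_PiM PiE_def extensional_restrict)
  also have "\<dots> = (\<Pi>\<^sub>M i\<in>I. distr (\<Pi>\<^sub>M i\<in>I. M i) (M i) (\<lambda>\<omega>. \<omega> i))"
    using prob_space by (auto simp: distr_PiM_component intro!: PiM_cong)
  finally show ?thesis
    using assms by (subst P.indep_vars_iff_distr_eq_PiM') auto
qed

lemma (in prob_space) sum_indep_normal_scaled:
  assumes "finite I" and indep: "indep_vars (\<lambda>_. borel) X I"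
    and normal: "\<And>i. i \<in> I \<Longrightarrow> distributed M lborel (X i) (normal_density (\<mu> i) (\<sigma> i))"
    and pos: "\<And>i. i \<in> I \<Longrightarrow> 0 < \<sigma> i" and "\<exists>i\<in>I. c i \<noteq> 0"
  shows "distributed M lborel (\<lambda>x. \<Sum>i\<in>I. c i * X i x)
           (normal_density (\<Sum>i\<in>I. c i * \<mu> i) (sqrt (\<Sum>i\<in>I. (c i * \<sigma> i)\<^sup>2)))"
proof -
  define J where "J = {i \<in> I. c i \<noteq> 0}"
  have J: "finite J" "J \<noteq> {}" "J \<subseteq> I"
    using assms by (auto simp: J_def)
  have "indep_vars (\<lambda>_. borel) (\<lambda>i x. c i * X i x) J"
    by (rule indep_vars_compose2[OF indep_vars_subset[OF indep \<open>J \<subseteq> I\<close>]]) simp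
  moreover have "distributed M lborel (\<lambda>x. c i * X i x) (normal_density (c i * \<mu> i) (\<bar>c i\<bar> * \<sigma> i))"
    if "i \<in> J" for i
    using normal_density_affine[OF normal pos, of i "c i" 0] that by (simp add: J_def)
  ultimately have "distributed M lborel (\<lambda>x. \<Sum>i\<in>J. c i * X i x)
      (normal_density (\<Sum>i\<in>J. c i * \<mu> i) (sqrt (\<Sum>i\<in>J. (\<bar>c i\<bar> * \<sigma> i)\<^sup>2)))"
    using J pos by (intro sum_indep_normal) (auto simp: J_def)
  moreover have "(\<Sum>i\<in>J. f i) = (\<Sum>i\<in>I. f i)" if "\<And>i. c i = 0 \<Longrightarrow> f i = 0" for f :: "_ \<Rightarrow> real"
    using J that by (intro sum.mono_neutral_left) (auto simp: J_def \<open>finite I\<close>)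
  ultimately show ?thesis
    by (simp add: power_mult_distrib)
qed

lemma distributed_PiM_component:
  fixes f :: "real \<Rightarrow> real" and M :: "'i \<Rightarrow> real measure"
  assumes prob: "\<And>j. j \<in> I \<Longrightarrow> prob_space (M j)" and "i \<in> I"
    and Mi: "M i = density lborel f" and [measurable]: "f \<in> borel_measurable borel"
  shows "distributed (\<Pi>\<^sub>M i\<in>I. M i) lborel (\<lambda>\<omega>. \<omega> i) f"
proof -
  have sets_Mi: "sets (M i) = sets lborel"
    by (simp add: Mi)
  have "distr (\<Pi>\<^sub>M i\<in>I. M i) lborel (\<lambda>\<omega>. \<omega> i) = distr (\<Pi>\<^sub>M i\<in>I. M i) (M i) (\<lambda>\<omega>. \<omega> i)"
    by (rule distr_cong) (simp_all add: sets_Mi)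
  also have "\<dots> = M i"
    using prob \<open>i \<in> I\<close> by (simp add: distr_PiM_component)
  moreover have "(\<lambda>\<omega>. \<omega> i) \<in> measurable (\<Pi>\<^sub>M i\<in>I. M i) lborel"
    using measurable_component_singleton[OF \<open>i \<in> I\<close>, of M]
    by (simp only: measurable_cong_sets[OF refl sets_Mi])
  ultimately show ?thesis
    by (simp add: distributed_def Mi)
qed

lemma sqrt_sum_Basis_inner_scaled_square:
  fixes w :: "'a::euclidean_space"
  assumes "0 \<le> s"
  shows "sqrt (\<Sum>b\<in>Basis. ((w \<bullet> b) * s)\<^sup>2) = s * norm w"
proof -
  have "(\<Sum>b\<in>Basis. ((w \<bullet> b) * s)\<^sup>2) = s\<^sup>2 * (\<Sum>b\<in>Basis. (w \<bullet> b) * (w \<bullet> b))"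
    by (simp add: sum_distrib_left power2_eq_square mult_ac)
  also have "(\<Sum>b\<in>Basis. (w \<bullet> b) * (w \<bullet> b)) = (norm w)\<^sup>2"
    by (simp add: euclidean_inner[of w w, symmetric] power2_norm_eq_inner)
  finally show ?thesis
    using assms by (simp add: real_sqrt_mult)
qed

lemma gauss_inner_distributed:
  fixes mu w :: "real^'n::finite"
  assumes s: "0 < s" and w: "w \<noteq> 0"
  shows "distributed (gauss mu s) lborel (\<lambda>x. w \<bullet> x) (normal_density (w \<bullet> mu) (s * norm w))"
proof -
  define N where "N b = density lborel (normal_density (mu \<bullet> b) s)" for b :: "real^'n"
  define T where "T f = (\<Sum>b\<in>Basis. f b *\<^sub>R b)" for f :: "real^'n \<Rightarrow> real"
  interpret product_prob_space N Basis
    unfolding N_def product_prob_space_def product_prob_space_axioms_def product_sigma_finite_def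
    using s by (auto intro: prob_space_normal_density prob_space_imp_sigma_finite)
  have sets_N: "sets (N b) = sets borel" for b
    by (simp add: N_def)
  have "sets (\<Pi>\<^sub>M b\<in>Basis. N b) = sets (\<Pi>\<^sub>M b\<in>Basis. lborel)"
    using sets_N by (intro sets_PiM_cong) simp_all
  moreover have "T \<in> measurable (\<Pi>\<^sub>M b\<in>Basis. lborel) borel"
    unfolding T_def by measurable
  ultimately have [measurable]: "T \<in> measurable (\<Pi>\<^sub>M b\<in>Basis. N b) borel"
    by (subst measurable_cong_sets) auto
  have coord: "distributed (\<Pi>\<^sub>M b\<in>Basis. N b) lborel (\<lambda>f. f b) (normal_density (mu \<bullet> b) s)"
    if "b \<in> Basis" for b
    using that prob_space by (intro distributed_PiM_component) (simp_all add: N_def)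
  have lincomb: "distributed (\<Pi>\<^sub>M b\<in>Basis. N b) lborel (\<lambda>f. \<Sum>b\<in>Basis. (w \<bullet> b) * f b)
      (normal_density (\<Sum>b\<in>Basis. (w \<bullet> b) * (mu \<bullet> b)) (sqrt (\<Sum>b\<in>Basis. ((w \<bullet> b) * s)\<^sup>2)))"
  proof (rule P.sum_indep_normal_scaled)
    have "P.indep_vars N (\<lambda>b f. f b) Basis"
      by (rule indep_vars_PiM_components) auto
    then show "P.indep_vars (\<lambda>_. borel) (\<lambda>b f. f b) Basis"
      by (rule P.indep_vars_compose2[where Y="\<lambda>_ x. x", simplified]) (simp add: N_def)
    show "\<exists>b\<in>Basis. w \<bullet> b \<noteq> 0"
      using w euclidean_eqI[of w 0] by auto
  qed (use s coord in auto)
  have "(\<Sum>b\<in>Basis. (w \<bullet> b) * (mu \<bullet> b)) = w \<bullet> mu"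
    by (rule euclidean_inner[symmetric])
  moreover have "sqrt (\<Sum>b\<in>Basis. ((w \<bullet> b) * s)\<^sup>2) = s * norm w"
    using s by (simp add: sqrt_sum_Basis_inner_scaled_square)
  moreover have "distr (gauss mu s) lborel (\<lambda>x. w \<bullet> x) = distr (\<Pi>\<^sub>M b\<in>Basis. N b) lborel ((\<lambda>x. w \<bullet> x) \<circ> T)"
    unfolding gauss_eq_distr_PiM[OF s] N_def[symmetric] T_def[symmetric] by (rule distr_distr) measurable
  moreover have "(\<lambda>x. w \<bullet> x) \<circ> T = (\<lambda>f. \<Sum>b\<in>Basis. (w \<bullet> b) * f b)"
    by (simp add: fun_eq_iff T_def inner_sum_right mult.commute)
  ultimately show ?thesis
    using lincomb s by (auto simp: distributed_def gauss_def)
qed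

lemma distr_pair_snd:
  assumes "prob_space M1" and "sigma_finite_measure M2"
  shows "distr (M1 \<Otimes>\<^sub>M M2) M2 snd = M2"
proof (rule measure_eqI)
  interpret M1: prob_space M1 by fact
  interpret M2: sigma_finite_measure M2 by fact
  fix A assume A: "A \<in> sets (distr (M1 \<Otimes>\<^sub>M M2) M2 snd)"
  then have "emeasure (distr (M1 \<Otimes>\<^sub>M M2) M2 snd) A = emeasure (M1 \<Otimes>\<^sub>M M2) (space M1 \<times> A)"
    by (auto simp: emeasure_distr space_pair_measure dest: sets.sets_into_space
        intro!: arg_cong2[where f=emeasure])
  with A show "emeasure (distr (M1 \<Otimes>\<^sub>M M2) M2 snd) A = emeasure M2 A"
    by (simp add: M2.emeasure_pair_measure_Times M1.emeasure_space_1)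
qed simp

lemma distributed_pair_add_normal:
  assumes M1: "prob_space M1" and M2: "prob_space M2"
    and X: "distributed M1 lborel X (normal_density \<mu> \<sigma>)" and "0 < \<sigma>"
    and Y: "distributed M2 lborel Y (normal_density \<nu> \<tau>)" and "0 < \<tau>"
  shows "distributed (M1 \<Otimes>\<^sub>M M2) lborel (\<lambda>p. X (fst p) + Y (snd p))
           (normal_density (\<mu> + \<nu>) (sqrt (\<sigma>\<^sup>2 + \<tau>\<^sup>2)))"
proof -
  interpret pair_prob_space M1 M2
    using M1 M2 by (simp add: pair_prob_space_def pair_sigma_finite_def prob_space_imp_sigma_finite)
  have [measurable]: "X \<in> borel_measurable M1" "Y \<in> borel_measurable M2"
    using X Y by (auto simp: distributed_def)
  have fst: "distr (M1 \<Otimes>\<^sub>M M2) N (\<lambda>p. X (fst p)) = distr M1 N X" if "sets N = sets borel" for N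
  proof -
    have "distr (M1 \<Otimes>\<^sub>M M2) N (\<lambda>p. X (fst p)) = distr (distr (M1 \<Otimes>\<^sub>M M2) M1 fst) N X"
      using that by (subst distr_distr) (auto simp: comp_def measurable_cong_sets[OF refl that])
    then show ?thesis
      by (simp add: M2.distr_pair_fst)
  qed
  have snd: "distr (M1 \<Otimes>\<^sub>M M2) N (\<lambda>p. Y (snd p)) = distr M2 N Y" if "sets N = sets borel" for N
  proof -
    have "distr (M1 \<Otimes>\<^sub>M M2) N (\<lambda>p. Y (snd p)) = distr (distr (M1 \<Otimes>\<^sub>M M2) M2 snd) N Y"
      using that by (subst distr_distr) (auto simp: comp_def measurable_cong_sets[OF refl that])
    then show ?thesis
      using M1 M2.sigma_finite_measure_axioms by (simp add: distr_pair_snd)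
  qed
  have "indep_var borel (\<lambda>p. X (fst p)) borel (\<lambda>p. Y (snd p))"
  proof (subst indep_var_distribution_eq, intro conjI)
    have "sigma_finite_measure (distr M2 borel Y)"
      by (intro prob_space_imp_sigma_finite M2.prob_space_distr) measurable
    then have "distr M1 borel X \<Otimes>\<^sub>M distr M2 borel Y
        = distr (M1 \<Otimes>\<^sub>M M2) (borel \<Otimes>\<^sub>M borel) (\<lambda>(x, y). (X x, Y y))"
      by (rule pair_measure_distr[rotated 2]) measurable
    then show "distr (M1 \<Otimes>\<^sub>M M2) borel (\<lambda>p. X (fst p)) \<Otimes>\<^sub>M distr (M1 \<Otimes>\<^sub>M M2) borel (\<lambda>p. Y (snd p))
        = distr (M1 \<Otimes>\<^sub>M M2) (borel \<Otimes>\<^sub>M borel) (\<lambda>p. (X (fst p), Y (snd p)))"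
      by (simp add: fst snd split_beta')
  qed measurable
  then show ?thesis
    using assms by (intro add_indep_normal) (auto simp: distributed_def fst snd)
qed

lemma pair_measure_return:
  assumes "sigma_finite_measure M" and "a \<in> space N"
  shows "M \<Otimes>\<^sub>M return N a = distr M (M \<Otimes>\<^sub>M N) (\<lambda>x. (x, a))"
proof (rule pair_measure_eqI)
  show "sigma_finite_measure (return N a)"
    using assms(2) by (intro prob_space_imp_sigma_finite prob_space_return)
  show "sets (M \<Otimes>\<^sub>M return N a) = sets (distr M (M \<Otimes>\<^sub>M N) (\<lambda>x. (x, a)))"
    by (simp cong: sets_pair_measure_cong)
next
  fix A B assume A: "A \<in> sets M" and B: "B \<in> sets (return N a)"
  then have "(\<lambda>x. (x, a)) -` (A \<times> B) \<inter> space M = (if a \<in> B then A else {})"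
    using sets.sets_into_space[OF A] by auto
  then show "emeasure M A * emeasure (return N a) B = emeasure (distr M (M \<Otimes>\<^sub>M N) (\<lambda>x. (x, a))) (A \<times> B)"
    using A B assms(2) by (simp add: emeasure_distr)
qed fact

lemma gauss_pair_inner_add_distributed:
  fixes mu w :: "real^'n::finite"
  assumes s: "0 < s" and sI: "0 \<le> sI" and w: "w \<noteq> 0"
  shows "distributed (gauss mu s \<Otimes>\<^sub>M gauss 0 sI) lborel (\<lambda>p. w \<bullet> (fst p + snd p))
           (normal_density (w \<bullet> mu) (norm w * sqrt (s\<^sup>2 + sI\<^sup>2)))"
proof (cases "sI = 0")
  case True
  then have "gauss (0 :: real^'n) sI = return lborel 0"
    by (simp add: gauss_def)
  moreover have "sigma_finite_measure (gauss mu s)"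
    using s by (intro prob_space_imp_sigma_finite prob_space_gauss) simp
  ultimately have pair: "gauss mu s \<Otimes>\<^sub>M gauss (0 :: real^'n) sI = distr (gauss mu s) (gauss mu s \<Otimes>\<^sub>M lborel) (\<lambda>x. (x, 0))"
    by (simp add: pair_measure_return)
  have "distr (gauss mu s \<Otimes>\<^sub>M gauss 0 sI) lborel (\<lambda>p. w \<bullet> (fst p + snd p))
      = distr (gauss mu s) lborel ((\<lambda>p. w \<bullet> (fst p + snd p)) \<circ> (\<lambda>x. (x, 0)))"
    unfolding pair by (rule distr_distr) measurable
  then show ?thesis
    using gauss_inner_distributed[OF s w] True s by (simp add: distributed_def comp_def mult.commute)
next
  case False
  with sI have "0 < sI" by simp
  have "distributed (gauss mu s \<Otimes>\<^sub>M gauss 0 sI) lborel (\<lambda>p. w \<bullet> fst p + w \<bullet> snd p)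
      (normal_density (w \<bullet> mu + w \<bullet> 0) (sqrt ((s * norm w)\<^sup>2 + (sI * norm w)\<^sup>2)))"
    using s sI \<open>0 < sI\<close> w
    by (intro distributed_pair_add_normal prob_space_gauss gauss_inner_distributed) auto
  moreover have "sqrt ((s * norm w)\<^sup>2 + (sI * norm w)\<^sup>2) = norm w * sqrt (s\<^sup>2 + sI\<^sup>2)"
    by (simp add: power_mult_distrib real_sqrt_mult flip: distrib_right)
  ultimately show ?thesis
    by (simp add: inner_add_right)
qed

section \<open>Risk and input smoothness of a linear classifier\<close>

lemma lin_risk_eq:
  fixes w :: "real^'n::finite"
  assumes sp: "0 < sp" and sm: "0 < sm" and w: "w \<noteq> 0"
  shows "lin_risk alpha sp sm w b = alpha * Phi (- ((w \<bullet> ones + b) / (sp * norm w)))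
                                   + (1 - alpha) * Phi (- ((w \<bullet> ones - b) / (sm * norm w)))"
proof -
  interpret P: prob_space "gauss (ones :: real^'n) sp"
    using sp by (simp add: prob_space_gauss)
  interpret N: prob_space "gauss (- ones :: real^'n) sm"
    using sm by (simp add: prob_space_gauss)
  have "{x. lin_clf w b x = -1} = space (gauss ones sp) - {x \<in> space (gauss ones sp). - b < w \<bullet> x}"
    by (auto simp: lin_clf_def)
  moreover have "{x \<in> space (gauss ones sp). - b < w \<bullet> x} \<in> P.events"
    by measurable
  ultimately have "P.prob {x. lin_clf w b x = -1} = Phi (- ((w \<bullet> ones + b) / (sp * norm w)))"
    using P.prob_compl P.prob_normal_greater[OF gauss_inner_distributed[OF sp w], of "- b"] sp w
    by (simp add: Phi_minus)
  moreover have "{x. lin_clf w b x = 1} = {x \<in> space (gauss (- ones) sm). - b < w \<bullet> x}"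
    by (auto simp: lin_clf_def)
  moreover have "- ((w \<bullet> ones - b) / (sm * norm w)) = (b - w \<bullet> ones) / (sm * norm w)"
    by (metis minus_diff_eq minus_divide_left)
  ultimately show ?thesis
    using N.prob_normal_greater[OF gauss_inner_distributed[OF sm w], of "- b"] sm w
    by (simp add: lin_risk_def)
qed

lemma lin_risk_zero_weight:
  assumes "0 \<le> sp" and "0 \<le> sm"
  shows "lin_risk alpha sp sm (0 :: real^'n::finite) b = (if 0 < b then 1 - alpha else alpha)"
proof -
  interpret P: prob_space "gauss (ones :: real^'n) sp"
    using assms by (simp add: prob_space_gauss)
  interpret N: prob_space "gauss (- ones :: real^'n) sm"
    using assms by (simp add: prob_space_gauss)
  show ?thesis
    using P.prob_space N.prob_space by (simp add: lin_risk_def lin_clf_def)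
qed

lemma smooth_pos_eq:
  fixes w :: "real^'n::finite"
  assumes sp: "0 < sp" and sI: "0 \<le> sI" and w: "w \<noteq> 0"
  shows "smooth_pos sI sp w b = Phi ((w \<bullet> ones + b) / (norm w * sqrt (sp\<^sup>2 + sI\<^sup>2)))"
proof -
  interpret Q: prob_space "gauss (ones :: real^'n) sp \<Otimes>\<^sub>M gauss 0 sI"
    using sp sI by (intro prob_space_pair prob_space_gauss) simp_all
  have "{(x, e). w \<bullet> (x + e) + b > 0}
      = {p \<in> space (gauss ones sp \<Otimes>\<^sub>M gauss 0 sI). - b < w \<bullet> (fst p + snd p)}"
    by (auto simp: space_pair_measure)
  then show ?thesis
    using Q.prob_normal_greater[OF gauss_pair_inner_add_distributed[OF sp sI w], of "- b"] sp w
    by (simp add: smooth_pos_def add_pos_nonneg)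
qed

lemma smooth_neg_eq:
  fixes w :: "real^'n::finite"
  assumes sm: "0 < sm" and sI: "0 \<le> sI" and w: "w \<noteq> 0"
  shows "smooth_neg sI sm w b = Phi ((w \<bullet> ones - b) / (norm w * sqrt (sm\<^sup>2 + sI\<^sup>2)))"
proof -
  interpret Q: prob_space "gauss (- ones :: real^'n) sm \<Otimes>\<^sub>M gauss 0 sI"
    using sm sI by (intro prob_space_pair prob_space_gauss) simp_all
  have "{(x, e). w \<bullet> (x + e) + b < 0}
      = {p \<in> space (gauss (- ones) sm \<Otimes>\<^sub>M gauss 0 sI). w \<bullet> (fst p + snd p) < - b}"
    by (auto simp: space_pair_measure)
  then show ?thesis
    using Q.prob_normal_less[OF gauss_pair_inner_add_distributed[OF sm sI w], of "- b"] sm w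
    by (simp add: smooth_neg_def add_pos_nonneg)
qed

lemma smooth_pos_zero_weight:
  assumes "0 \<le> sp" and "0 \<le> sI" and "0 < b"
  shows "smooth_pos sI sp (0 :: real^'n::finite) b = 1"
proof -
  interpret Q: prob_space "gauss (ones :: real^'n) sp \<Otimes>\<^sub>M gauss 0 sI"
    using assms by (intro prob_space_pair prob_space_gauss) simp_all
  show ?thesis
    using Q.prob_space assms(3) by (simp add: smooth_pos_def space_pair_measure)
qed

section \<open>The risk minimiser\<close>

lemma std_normal_density_minus [simp]: "std_normal_density (- x) = std_normal_density x"
  by (simp add: std_normal_density_def)

lemma std_normal_density_less_iff: "std_normal_density a < std_normal_density b \<longleftrightarrow> \<bar>b\<bar> < \<bar>a\<bar>"
proof -
  have "std_normal_density a < std_normal_density b \<longleftrightarrow> b\<^sup>2 < a\<^sup>2"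
    by (simp add: std_normal_density_def divide_less_cancel)
  also have "\<dots> \<longleftrightarrow> \<bar>b\<bar> < \<bar>a\<bar>"
    by (meson abs_le_square_iff not_le)
  finally show ?thesis .
qed

lemma lin_risk_minimizer_first_order:
  fixes w :: "real^'n::finite"
  assumes sp: "0 < sp" and sm: "0 < sm" and w: "w \<noteq> 0"
    and min: "\<And>c. lin_risk alpha sp sm w b \<le> lin_risk alpha sp sm w c"
  shows "alpha * std_normal_density ((w \<bullet> ones + b) / (sp * norm w)) / sp
       = (1 - alpha) * std_normal_density ((w \<bullet> ones - b) / (sm * norm w)) / sm"
proof -
  define A where "A = (w \<bullet> ones + b) / (sp * norm w)"
  define B where "B = (w \<bullet> ones - b) / (sm * norm w)"
  have n: "0 < norm w" using w by simp
  have "((\<lambda>c. lin_risk alpha sp sm w c) has_real_derivative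
      alpha * (std_normal_density (- A) * (- 1 / (sp * norm w)))
      + (1 - alpha) * (std_normal_density (- B) * (1 / (sm * norm w)))) (at b)"
    unfolding lin_risk_eq[OF sp sm w] A_def B_def using sp sm n
    by (intro DERIV_add DERIV_cmult DERIV_chain2[OF Phi_has_real_derivative])
      (auto intro!: derivative_eq_intros simp: field_simps)
  then have "alpha * (std_normal_density A * (- 1 / (sp * norm w)))
      + (1 - alpha) * (std_normal_density B * (1 / (sm * norm w))) = 0"
    by (intro DERIV_local_min[where d=1]) (auto intro: min)
  moreover have "alpha * (std_normal_density A * (- 1 / (sp * norm w)))
      + (1 - alpha) * (std_normal_density B * (1 / (sm * norm w)))
      = ((1 - alpha) * std_normal_density B / sm - alpha * std_normal_density A / sp) / norm w"
    using sp sm n by (simp add: field_simps)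
  ultimately show ?thesis
    using n unfolding A_def[symmetric] B_def[symmetric] by simp
qed

lemma divide_sqrt_add_square_mono:
  fixes s t c :: real
  assumes "0 < s" and "s \<le> t" and "0 \<le> c"
  shows "s / sqrt (s\<^sup>2 + c) \<le> t / sqrt (t\<^sup>2 + c)"
proof -
  have "s\<^sup>2 * c \<le> t\<^sup>2 * c"
    using assms by (intro mult_right_mono power_mono) auto
  then have "s\<^sup>2 * (t\<^sup>2 + c) \<le> t\<^sup>2 * (s\<^sup>2 + c)"
    by (simp add: distrib_left mult.commute)
  then have "(s * sqrt (t\<^sup>2 + c))\<^sup>2 \<le> (t * sqrt (s\<^sup>2 + c))\<^sup>2"
    using assms by (simp add: power_mult_distrib)
  then have "s * sqrt (t\<^sup>2 + c) \<le> t * sqrt (s\<^sup>2 + c)"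
    using assms by (auto intro: power2_le_imp_le)
  moreover have "0 < sqrt (s\<^sup>2 + c)" and "0 < sqrt (t\<^sup>2 + c)"
    using assms by (auto intro: add_pos_nonneg)
  ultimately show ?thesis
    by (simp add: field_simps)
qed

lemma half_less_of_weighted_prior:
  fixes alpha sp sm :: real
  assumes "0 < sm" and "sm < sp" and "0 < alpha" and "(1 - alpha) * sp < alpha * sm"
  shows "1 - alpha < alpha"
proof -
  have "(1 - alpha) * sp < alpha * sp"
    using assms mult_strict_left_mono[of sm sp alpha] by linarith
  then show ?thesis
    using assms(1,2) by simp
qed

lemma smoothed_margin_less:
  fixes alpha sp sm sI A B :: real
  assumes alpha: "0 < alpha" "alpha < 1" and sm: "0 < sm" "sm < sp" and sI: "0 \<le> sI"
    and prior: "(1 - alpha) * sp < alpha * sm"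
    and foc: "alpha * std_normal_density A / sp = (1 - alpha) * std_normal_density B / sm"
    and risk: "alpha * Phi (- A) + (1 - alpha) * Phi (- B) \<le> 1 - alpha"
  shows "B * sm / sqrt (sm\<^sup>2 + sI\<^sup>2) < A * sp / sqrt (sp\<^sup>2 + sI\<^sup>2)"
proof -
  have "1 - alpha < alpha"
    using sm alpha(1) prior by (rule half_less_of_weighted_prior)
  have "(1 - alpha) * sp / (alpha * sm) < 1"
    using prior alpha sm by (simp add: divide_less_eq)
  have "std_normal_density A = (1 - alpha) * sp / (alpha * sm) * std_normal_density B"
    using foc alpha sm by (simp add: field_simps)
  also have "\<dots> < 1 * std_normal_density B"
    by (rule mult_strict_right_mono[OF \<open>(1 - alpha) * sp / (alpha * sm) < 1\<close> normal_density_pos]) simp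
  finally have "\<bar>B\<bar> < \<bar>A\<bar>"
    by (simp add: std_normal_density_less_iff)
  have "0 < A"
  proof (rule ccontr)
    assume "\<not> 0 < A"
    with \<open>\<bar>B\<bar> < \<bar>A\<bar>\<close> have "\<bar>B\<bar> < - A" by simp
    then have "alpha * Phi \<bar>B\<bar> + (1 - alpha) * Phi (- \<bar>B\<bar>) < alpha * Phi (- A) + (1 - alpha) * Phi (- B)"
      using alpha by (intro add_less_le_mono mult_strict_left_mono mult_left_mono) auto
    moreover have "alpha * Phi \<bar>B\<bar> + (1 - alpha) * Phi (- \<bar>B\<bar>) = (2 * alpha - 1) * Phi \<bar>B\<bar> + (1 - alpha)"
      by (simp add: Phi_minus algebra_simps)
    moreover have "0 \<le> (2 * alpha - 1) * Phi \<bar>B\<bar>"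
      using \<open>1 - alpha < alpha\<close> Phi_nonneg by simp
    ultimately show False
      using risk by linarith
  qed
  have ratio_pos: "0 < sm / sqrt (sm\<^sup>2 + sI\<^sup>2)"
    using sm by (simp add: add_pos_nonneg)
  have "B * sm / sqrt (sm\<^sup>2 + sI\<^sup>2) \<le> \<bar>B\<bar> * (sm / sqrt (sm\<^sup>2 + sI\<^sup>2))"
    using ratio_pos by (simp add: mult_right_mono flip: times_divide_eq_right)
  also have "\<dots> < A * (sm / sqrt (sm\<^sup>2 + sI\<^sup>2))"
    using \<open>\<bar>B\<bar> < \<bar>A\<bar>\<close> \<open>0 < A\<close> ratio_pos by (intro mult_strict_right_mono) simp_all
  also have "\<dots> \<le> A * (sp / sqrt (sp\<^sup>2 + sI\<^sup>2))"
    using \<open>0 < A\<close> sm sI by (intro mult_left_mono divide_sqrt_add_square_mono) auto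
  finally show ?thesis
    by simp
qed

theorem lemmaD2:
  fixes alpha sp sm sI b :: real and w :: "real^'n::finite"
  assumes "0 < alpha" "alpha < 1" "sp > 0" "sm > 0" "sI \<ge> 0"
    and "\<forall>(w'::real^'n) b'. lin_risk alpha sp sm w b \<le> lin_risk alpha sp sm w' b'"
    and "sp > sm"
    and "alpha * sm / ((1 - alpha) * sp) > 1"
  shows "smooth_pos sI sp w b > smooth_neg sI sm w b"
proof -
  note optimal = \<open>\<forall>w' b'. lin_risk alpha sp sm w b \<le> lin_risk alpha sp sm w' b'\<close>
  have prior: "(1 - alpha) * sp < alpha * sm"
    using \<open>alpha < 1\<close> \<open>sp > 0\<close> \<open>alpha * sm / ((1 - alpha) * sp) > 1\<close>
    by (simp add: divide_simps split: if_splits)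
  \<comment> \<open>\<open>w = 0, b = 1\<close> is the constant classifier \<open>+1\<close>\<close>
  have risk_le: "lin_risk alpha sp sm w b \<le> 1 - alpha"
    using optimal[rule_format, of 0 1] lin_risk_zero_weight[where 'n='n, of sp sm alpha 1]
      \<open>sp > 0\<close> \<open>sm > 0\<close> by simp
  show ?thesis
  proof (cases "w = 0")
    case True
    have "1 - alpha < alpha"
      using \<open>sm > 0\<close> \<open>sp > sm\<close> \<open>0 < alpha\<close> prior by (rule half_less_of_weighted_prior)
    then have "0 < b"
      using risk_le True lin_risk_zero_weight[where 'n='n, of sp sm alpha b] \<open>sp > 0\<close> \<open>sm > 0\<close>
      by (auto split: if_splits)
    then show ?thesis
      using True smooth_pos_zero_weight[where 'n='n, of sp sI b] \<open>sp > 0\<close> \<open>sI \<ge> 0\<close>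
      by (simp add: smooth_neg_def)
  next
    case False
    define A where "A = (w \<bullet> ones + b) / (sp * norm w)"
    define B where "B = (w \<bullet> ones - b) / (sm * norm w)"
    have "alpha * std_normal_density A / sp = (1 - alpha) * std_normal_density B / sm"
      unfolding A_def B_def using \<open>sp > 0\<close> \<open>sm > 0\<close> False optimal
      by (intro lin_risk_minimizer_first_order) auto
    moreover have "alpha * Phi (- A) + (1 - alpha) * Phi (- B) \<le> 1 - alpha"
      using risk_le \<open>sp > 0\<close> \<open>sm > 0\<close> False by (simp add: lin_risk_eq A_def B_def)
    ultimately have "B * sm / sqrt (sm\<^sup>2 + sI\<^sup>2) < A * sp / sqrt (sp\<^sup>2 + sI\<^sup>2)"
      using \<open>0 < alpha\<close> \<open>alpha < 1\<close> \<open>sm > 0\<close> \<open>sp > sm\<close> \<open>sI \<ge> 0\<close> prior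
      by (intro smoothed_margin_less)
    moreover have "smooth_pos sI sp w b = Phi (A * sp / sqrt (sp\<^sup>2 + sI\<^sup>2))"
      and "smooth_neg sI sm w b = Phi (B * sm / sqrt (sm\<^sup>2 + sI\<^sup>2))"
      using \<open>sp > 0\<close> \<open>sm > 0\<close> \<open>sI \<ge> 0\<close> False
      by (simp_all add: smooth_pos_eq smooth_neg_eq A_def B_def)
    ultimately show ?thesis
      by simp
  qed
qed

end
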